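(* Let $f:\mathbb{F}_q^k\to\mathrm{Im}(f)$ and let $d_d<d_f$ be nonnegative integers. Let $L=\max_{\alpha\in\mathrm{Im}(f)}|f^{-1}(\alpha)|$. Then $$r_f(k:d_d,d_f)\ge\frac{(L-1)d_d+(q^k-L)d_f}{q^{k-1}(q-1)}-k.$$
   Context: $d(\cdot,\cdot)$ is Hamming distance; $f^{-1}(\alpha)=\{u:f(u)=\alpha\}$. For integers $0\le d_d\le d_f$, an $(f\!:d_d,d_f)$-FCC with redundancy $r$ is a systematic encoding $\mathfrak{C}_f(u)=(u,p_u)\in\mathbb{F}_q^{k+r}$ with $d(\mathfrak{C}_f(u_1),\mathfrak{C}_f(u_2))\ge d_d$ whenever $u_1\ne u_2$ and $\ge d_f$ whenever $f(u_1)\ne f(u_2)$; $r_f(k:d_d,d_f)$ is the minimum such $r$. *)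

theory Defs
  imports Complex_Main
begin

text \<open>Vectors in F_q^n are lists of length n over a finite field type.\<close>

definition words :: "nat \<Rightarrow> 'a list set" where
  "words n = {u. length u = n}"

definition hamming :: "'a list \<Rightarrow> 'a list \<Rightarrow> nat" where
  "hamming x y = card {i. i < length x \<and> x ! i \<noteq> y ! i}"

text \<open>Systematic encoding u |-> (u, p u) with redundancy r is an (f: dd, df)-FCC.\<close>
definition is_FCC :: "('a list \<Rightarrow> 'b) \<Rightarrow> nat \<Rightarrow> nat \<Rightarrow> nat \<Rightarrow> nat \<Rightarrow> ('a list \<Rightarrow> 'a list) \<Rightarrow> bool" where
  "is_FCC f k dd df r p \<longleftrightarrow>
     (\<forall>u\<in>words k. length (p u) = r) \<and>
     (\<forall>u1\<in>words k. \<forall>u2\<in>words k. u1 \<noteq> u2 \<longrightarrow> dd \<le> hamming (u1 @ p u1) (u2 @ p u2)) \<and>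
     (\<forall>u1\<in>words k. \<forall>u2\<in>words k. f u1 \<noteq> f u2 \<longrightarrow> df \<le> hamming (u1 @ p u1) (u2 @ p u2))"

definition r_f :: "('a list \<Rightarrow> 'b) \<Rightarrow> nat \<Rightarrow> nat \<Rightarrow> nat \<Rightarrow> nat" where
  "r_f f k dd df = (LEAST r. \<exists>p. is_FCC f k dd df r p)"

definition max_preimage :: "('a list \<Rightarrow> 'b) \<Rightarrow> nat \<Rightarrow> nat" where
  "max_preimage f k = Max ((\<lambda>\<alpha>. card {u\<in>words k. f u = \<alpha>}) ` (f ` words k))"

end

theory Submission
  imports Defs "HOL-Analysis.Convex"
begin

text \<open>A Plotkin-type averaging argument on the codewords \<open>c u = u @ p u\<close>, \<open>u \<in> \<bbbF>\<^sub>q\<^sup>k\<close>.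
  Seen from a fixed \<open>u\<close>, the other codewords with the same \<open>f\<close>-value (at most \<open>L - 1\<close>) are
  at distance at least \<open>d\<^sub>d\<close> and all others at distance at least \<open>d\<^sub>f \<ge> d\<^sub>d\<close>, so the distances
  from \<open>u\<close> add up to at least \<open>(L - 1) d\<^sub>d + (q\<^sup>k - L) d\<^sub>f\<close>. On the other hand, by Cauchy-Schwarz
  applied to the symbol counts, in each of the \<open>k + r\<close> coordinates at most a fraction
  \<open>(q - 1)/q\<close> of the \<open>q\<^sup>2\<^sup>k\<close> ordered pairs of codewords disagree. Comparing the two estimates
  of the total distance bounds \<open>k + r\<close> from below. A repetition code shows that some
  redundancy is feasible, so the minimum \<open>r\<^sub>f\<close> is attained.\<close>

lemma hamming_eq_sum: "hamming x y = (\<Sum>i<length x. of_bool (x ! i \<noteq> y ! i))"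
  unfolding hamming_def by (simp add: Int_def lessThan_def conj_commute)

lemma of_nat_hamming_eq_sum:
  "of_nat (hamming x y) = (\<Sum>i<length x. of_bool (x ! i \<noteq> y ! i))"
  unfolding hamming_eq_sum of_nat_sum by simp

lemma hamming_Nil [simp]: "hamming [] y = 0"
  by (simp add: hamming_def)

lemma hamming_Cons: "hamming (a # x) (b # y) = of_bool (a \<noteq> b) + hamming x y"
  unfolding hamming_eq_sum length_Cons sum.lessThan_Suc_shift by (simp del: sum_of_bool_eq)

lemma hamming_append:
  "length x = length y \<Longrightarrow> hamming (x @ x') (y @ y') = hamming x y + hamming x' y'"
proof (induction x arbitrary: y)
  case (Cons a x)
  then obtain b y0 where "y = b # y0" by (cases y) auto
  with Cons show ?case by (simp add: hamming_Cons)
qed simp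

lemma hamming_concat_replicate:
  "length x = length y \<Longrightarrow>
    hamming (concat (replicate m x)) (concat (replicate m y)) = m * hamming x y"
  by (induction m) (simp_all add: hamming_append length_concat sum_list_replicate)

lemma hamming_pos: "length x = length y \<Longrightarrow> x \<noteq> y \<Longrightarrow> 0 < hamming x y"
  unfolding hamming_def by (auto simp: card_gt_0_iff) (metis nth_equalityI)

lemma finite_words: "finite (words k :: 'a::finite list set)"
  and card_words: "card (words k :: 'a::finite list set) = card (UNIV :: 'a set) ^ k"
  using finite_lists_length_eq[of "UNIV :: 'a set" k] card_lists_length_eq[of "UNIV :: 'a set" k]
  by (simp_all add: words_def)

lemma is_FCC_repetition:
  assumes "dd \<le> df"
  shows "is_FCC f k dd df (df * k) (\<lambda>u. concat (replicate df u))"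
proof -
  have "df < hamming (u @ concat (replicate df u)) (v @ concat (replicate df v))"
    if "u \<in> words k" "v \<in> words k" "u \<noteq> v" for u v :: "'a list"
  proof -
    have len: "length u = length v" using that by (simp add: words_def)
    then have "0 < hamming u v" using that(3) by (rule hamming_pos)
    then have "df \<le> df * hamming u v" by simp
    with \<open>0 < hamming u v\<close> show ?thesis
      by (simp only: hamming_append[OF len] hamming_concat_replicate[OF len])
  qed
  with assms show ?thesis
    unfolding is_FCC_def by (fastforce simp: words_def length_concat sum_list_replicate)
qed

lemma r_f_attained:
  assumes "dd \<le> df"
  obtains p where "is_FCC f k dd df (r_f f k dd df) p"
  using LeastI_ex[of "\<lambda>r. \<exists>p. is_FCC f k dd df r p"] is_FCC_repetition[OF assms]
  unfolding r_f_def by blast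

lemma sum_agree_eq_sum_square_fibres:
  fixes g :: "'x \<Rightarrow> 'a::finite"
  assumes "finite W"
  shows "(\<Sum>u\<in>W. \<Sum>v\<in>W. of_bool (g u = g v)) = (\<Sum>a\<in>UNIV. real (card {u\<in>W. g u = a}) ^ 2)"
proof -
  have "(\<Sum>u\<in>W. \<Sum>v\<in>W. of_bool (g u = g v)) = (\<Sum>u\<in>W. real (card {v\<in>W. g v = g u}))"
    using assms by (simp add: Int_def eq_commute)
  also have "\<dots> = (\<Sum>a\<in>UNIV. \<Sum>u\<in>{u\<in>W. g u = a}. real (card {v\<in>W. g v = g u}))"
    by (rule sum.group[OF assms finite_UNIV subset_UNIV, symmetric])
  also have "\<dots> = (\<Sum>a\<in>UNIV. \<Sum>u\<in>{u\<in>W. g u = a}. real (card {v\<in>W. g v = a}))"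
    by (intro sum.cong) auto
  also have "\<dots> = (\<Sum>a\<in>UNIV. real (card {u\<in>W. g u = a}) ^ 2)"
    by (simp add: power2_eq_square)
  finally show ?thesis .
qed

lemma sum_card_fibres:
  fixes g :: "'x \<Rightarrow> 'a::finite"
  assumes "finite W"
  shows "(\<Sum>a\<in>UNIV. real (card {u\<in>W. g u = a})) = real (card W)"
  using sum.group[OF assms finite_UNIV subset_UNIV, of "\<lambda>_. 1 :: real" g] by simp

lemma plotkin_coordinate_bound:
  fixes g :: "'x \<Rightarrow> 'a::finite"
  assumes "finite W"
  shows "real (card (UNIV :: 'a set)) * (\<Sum>u\<in>W. \<Sum>v\<in>W. of_bool (g u \<noteq> g v))
    \<le> (real (card (UNIV :: 'a set)) - 1) * real (card W) ^ 2"
proof -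
  define q where "q = real (card (UNIV :: 'a set))"
  define A where "A = (\<Sum>u\<in>W. \<Sum>v\<in>W. of_bool (g u = g v) :: real)"
  have cauchy_schwarz: "real (card W) ^ 2 \<le> q * A"
    using sum_squared_le_sum_of_squares[of "\<lambda>a. real (card {u\<in>W. g u = a})" UNIV]
    unfolding q_def A_def sum_agree_eq_sum_square_fibres[OF assms] sum_card_fibres[OF assms]
    by (simp add: mult.commute)
  have "(\<Sum>u\<in>W. \<Sum>v\<in>W. of_bool (g u \<noteq> g v)) = real (card W) ^ 2 - A"
    unfolding A_def by (simp add: of_bool_not_iff sum_subtractf power2_eq_square)
  then have "q * (\<Sum>u\<in>W. \<Sum>v\<in>W. of_bool (g u \<noteq> g v)) = q * real (card W) ^ 2 - q * A"
    by (simp add: right_diff_distrib)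
  also have "\<dots> \<le> q * real (card W) ^ 2 - real (card W) ^ 2"
    using cauchy_schwarz by simp
  also have "\<dots> = (q - 1) * real (card W) ^ 2"
    by (simp add: left_diff_distrib)
  finally show ?thesis unfolding q_def .
qed

lemma plotkin_sum_hamming_bound:
  fixes c :: "'x \<Rightarrow> 'a::finite list"
  assumes "finite W" and "\<And>u. u \<in> W \<Longrightarrow> length (c u) = n"
  shows "real (card (UNIV :: 'a set)) * (\<Sum>u\<in>W. \<Sum>v\<in>W. real (hamming (c u) (c v)))
    \<le> real n * (real (card (UNIV :: 'a set)) - 1) * real (card W) ^ 2"
proof -
  have "(\<Sum>u\<in>W. \<Sum>v\<in>W. real (hamming (c u) (c v)))
      = (\<Sum>u\<in>W. \<Sum>v\<in>W. \<Sum>i<n. of_bool (c u ! i \<noteq> c v ! i))"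
    using assms(2) by (intro sum.cong refl) (simp add: of_nat_hamming_eq_sum)
  also have "\<dots> = (\<Sum>u\<in>W. \<Sum>i<n. \<Sum>v\<in>W. of_bool (c u ! i \<noteq> c v ! i))"
    by (intro sum.cong refl sum.swap)
  also have "\<dots> = (\<Sum>i<n. \<Sum>u\<in>W. \<Sum>v\<in>W. of_bool (c u ! i \<noteq> c v ! i))"
    by (rule sum.swap)
  finally have "real (card (UNIV :: 'a set)) * (\<Sum>u\<in>W. \<Sum>v\<in>W. real (hamming (c u) (c v)))
      = (\<Sum>i<n. real (card (UNIV :: 'a set)) * (\<Sum>u\<in>W. \<Sum>v\<in>W. of_bool (c u ! i \<noteq> c v ! i)))"
    by (simp add: sum_distrib_left)
  also have "\<dots> \<le> (\<Sum>i<n. (real (card (UNIV :: 'a set)) - 1) * real (card W) ^ 2)"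
    by (intro sum_mono plotkin_coordinate_bound assms(1))
  finally show ?thesis by simp
qed

lemma card_fibre_le_max_preimage:
  fixes f :: "'a::finite list \<Rightarrow> 'b"
  assumes "u \<in> words k"
  shows "card {v \<in> words k. f v = f u} \<le> max_preimage f k"
  unfolding max_preimage_def using assms finite_words by (intro Max_ge) auto

lemma FCC_sum_hamming_lower_bound:
  fixes f :: "'a::finite list \<Rightarrow> 'b"
  assumes FCC: "is_FCC f k dd df r p" and "dd \<le> df" and u: "u \<in> words k"
  shows "(real (max_preimage f k) - 1) * real dd
      + (real (card (UNIV :: 'a set)) ^ k - real (max_preimage f k)) * real df
    \<le> (\<Sum>v\<in>words k. real (hamming (u @ p u) (v @ p v)))"
proof -
  define C where "C = {v \<in> words k. f v = f u}"
  define s where "s = real (card C)"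
  let ?d = "\<lambda>v. real (hamming (u @ p u) (v @ p v))"
  have C: "C \<subseteq> words k" "u \<in> C"
    using u unfolding C_def by auto
  then have "finite C"
    using finite_words finite_subset by blast
  with C(2) have "0 < card C"
    using card_gt_0_iff by blast
  have "(s - 1) * real dd = (\<Sum>v\<in>C - {u}. real dd)"
    using C(2) \<open>finite C\<close> \<open>0 < card C\<close> unfolding s_def by simp
  also have "\<dots> \<le> (\<Sum>v\<in>C - {u}. ?d v)"
    using FCC C(1) u unfolding is_FCC_def by (intro sum_mono) auto
  also have "\<dots> \<le> (\<Sum>v\<in>C. ?d v)"
    using \<open>finite C\<close> by (intro sum_mono2) auto
  finally have near: "(s - 1) * real dd \<le> (\<Sum>v\<in>C. ?d v)" .
  have "card (words k - C) = card (words k :: 'a list set) - card C"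
    using C(1) \<open>finite C\<close> by (rule card_Diff_subset[rotated])
  moreover have "card C \<le> card (words k :: 'a list set)"
    using C(1) finite_words by (rule card_mono[rotated])
  ultimately have "(real (card (UNIV :: 'a set)) ^ k - s) * real df = (\<Sum>v\<in>words k - C. real df)"
    unfolding s_def by (simp add: card_words)
  also have "\<dots> \<le> (\<Sum>v\<in>words k - C. ?d v)"
    using FCC u unfolding is_FCC_def C_def by (intro sum_mono) auto
  finally have far: "(real (card (UNIV :: 'a set)) ^ k - s) * real df \<le> (\<Sum>v\<in>words k - C. ?d v)" .
  have "s \<le> real (max_preimage f k)"
    using card_fibre_le_max_preimage[OF u] unfolding s_def C_def by simp
  with \<open>dd \<le> df\<close> have "0 \<le> (real (max_preimage f k) - s) * (real df - real dd)"
    by simp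
  then have "(real (max_preimage f k) - 1) * real dd
      + (real (card (UNIV :: 'a set)) ^ k - real (max_preimage f k)) * real df
    \<le> (s - 1) * real dd + (real (card (UNIV :: 'a set)) ^ k - s) * real df"
    by (simp add: algebra_simps)
  also have "\<dots> \<le> (\<Sum>v\<in>words k. ?d v)"
    using near far sum.subset_diff[OF C(1) finite_words, of ?d] by linarith
  finally show ?thesis .
qed

lemma FCC_redundancy_bound:
  fixes f :: "'a::finite list \<Rightarrow> 'b"
  assumes FCC: "is_FCC f k dd df r p" and "dd \<le> df" and q2: "2 \<le> card (UNIV :: 'a set)"
  shows "real r \<ge>
    ((real (max_preimage f k) - 1) * real dd
      + (real (card (UNIV :: 'a set)) ^ k - real (max_preimage f k)) * real df)
    / (real (card (UNIV :: 'a set)) ^ (k - 1) * (real (card (UNIV :: 'a set)) - 1)) - real k"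
proof -
  define q where "q = real (card (UNIV :: 'a set))"
  define X where "X = (real (max_preimage f k) - 1) * real dd + (q ^ k - real (max_preimage f k)) * real df"
  define S where "S = (\<Sum>u\<in>words k. \<Sum>v\<in>words k. real (hamming (u @ p u) (v @ p v)))"
  have "q > 1" using q2 unfolding q_def by simp
  have len: "\<And>u. u \<in> words k \<Longrightarrow> length (u @ p u) = k + r"
    using FCC unfolding is_FCC_def words_def by simp
  have "q ^ k * X = (\<Sum>u\<in>(words k :: 'a list set). X)"
    unfolding q_def by (simp add: card_words)
  also have "\<dots> \<le> S"
    unfolding S_def X_def q_def by (intro sum_mono FCC_sum_hamming_lower_bound[OF FCC \<open>dd \<le> df\<close>])
  finally have "q * (q ^ k * X) \<le> q * S"
    using \<open>q > 1\<close> by simp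
  also have "\<dots> \<le> real (k + r) * (q - 1) * real (card (words k :: 'a list set)) ^ 2"
    unfolding S_def q_def by (rule plotkin_sum_hamming_bound[OF finite_words len])
  also have "\<dots> = real (k + r) * (q - 1) * (q ^ k) ^ 2"
    unfolding q_def by (simp add: card_words)
  finally have "q * X \<le> real (k + r) * (q - 1) * q ^ k"
    using \<open>q > 1\<close> by (simp add: power2_eq_square mult_ac)
  also have "\<dots> \<le> real (k + r) * (q - 1) * (q * q ^ (k - 1))"
    \<comment> \<open>an equality unless \<open>k = 0\<close>, where \<open>k - 1\<close> truncates to \<open>0\<close>\<close>
    using \<open>q > 1\<close> by (intro mult_left_mono) (cases k, simp_all)
  finally have "X \<le> real (k + r) * (q ^ (k - 1) * (q - 1))"
    using \<open>q > 1\<close> by (simp add: mult_ac)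
  then have "X / (q ^ (k - 1) * (q - 1)) \<le> real (k + r)"
    using \<open>q > 1\<close> by (simp add: divide_le_eq)
  then show ?thesis
    unfolding X_def q_def by simp
qed

theorem theorem11:
  fixes f :: "('a::{finite,field}) list \<Rightarrow> 'b" and k dd df :: nat
  assumes "dd < df"
  shows "real (r_f f k dd df) \<ge>
    ((real (max_preimage f k) - 1) * real dd
      + (real (card (UNIV :: 'a set)) ^ k - real (max_preimage f k)) * real df)
    / (real (card (UNIV :: 'a set)) ^ (k - 1) * (real (card (UNIV :: 'a set)) - 1)) - real k"
proof -
  from assms have "dd \<le> df" by simp
  then obtain p where "is_FCC f k dd df (r_f f k dd df) p"
    by (rule r_f_attained)
  moreover have "2 \<le> card (UNIV :: 'a set)"
    using card_mono[OF finite_UNIV, of "{0, 1 :: 'a}"] by simp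
  ultimately show ?thesis
    using \<open>dd \<le> df\<close> by (intro FCC_redundancy_bound)
qed

end
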